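(* Let $\lambda$ be an indeterminate and define polynomials $S_n\in\mathbb{R}[\lambda]$ by $S_1=1$ and, for integers $n\ge2$, $$S_n=S_{n-1}-\sum_{j=1}^{n-1}(-\lambda)^j\,S_{n-j}\,M_{j,n}(1).$$ Then for all integers $0\le k<n$, the coefficient of $\lambda^k$ in $S_n$ equals $P_k(n)$; in particular $S_n|_{\lambda=1}=\sigma(n)$ and $S_n|_{\lambda=-1}=\rho(n)$.
   Context: For integers $n>j>0$ and real $y\in[0,1]$, $M_{j,n}(y)=\sum_{n_1>\cdots>n_j>0}\prod_{i=1}^{j}z_i^{n_i}/n_i$ with $z_1=y/n$ and $z_i=(n+2-i)/(n+1-i)$ for $1<i\le j$. The functions $P_k$ are defined by $P_0(u)=1$ for $u\ge0$, and for integers $k\ge1$, $P_k:[k,\infty)\to\mathbb{R}$ with $P_k(k)=0$ and $uP_k'(u)=P_{k-1}(u-1)$ for $u\ge k$. $\rho$ is the Dickman function (continuous, $\rho=1$ on $[0,1]$, $u\rho'(u)=-\rho(u-1)$ for $u>1$); $\sigma(u)=(u+1)\omega(u+1)$ with $\omega$ the Buchstab function (continuous on $[1,\infty)$, $u\omega(u)=1$ on $[1,2]$, $u\omega'(u)=\omega(u-1)-\omega(u)$ for $u>2$). *)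

theory Defs
  imports "HOL-Analysis.Analysis" "HOL-Computational_Algebra.Polynomial"
begin

text \<open>The point z_i of M_{j,n}; here indexed from 0, so mz n y 0 = y/n and
  mz n y i = (n+1-i)/(n-i) for i >= 1 (i.e. z_{i+1} in the paper's 1-based indexing).\<close>
definition mz :: "nat \<Rightarrow> real \<Rightarrow> nat \<Rightarrow> real" where
  "mz n y i = (if i = 0 then y / real n else (real n + 1 - real i) / (real n - real i))"

definition dec_tuples :: "nat \<Rightarrow> nat list set" where
  "dec_tuples j = {ns. length ns = j \<and> sorted_wrt (>) ns \<and> (\<forall>m\<in>set ns. m > 0)}"

definition M :: "nat \<Rightarrow> nat \<Rightarrow> real \<Rightarrow> real" where
  "M j n y = (\<Sum>\<^sub>\<infinity>ns\<in>dec_tuples j. \<Prod>i<j. mz n y i ^ (ns ! i) / real (ns ! i))"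

fun S :: "nat \<Rightarrow> real poly" where
  "S 0 = 0"
| "S (Suc 0) = 1"
| "S (Suc (Suc m)) = S (Suc m) -
     (\<Sum>j\<in>{1..Suc m}. [:0, -1:] ^ j * S (Suc (Suc m) - j) * [:M j (Suc (Suc m)) 1:])"

end

theory Submission
  imports Defs
begin

text \<open>
  By the recursion for \<open>S\<close>, the claim on coefficients reduces to the identity
  \<open>P\<^sub>k(n) - P\<^sub>k(n - y) = \<Sum>\<^sub>j\<^sub>=\<^sub>1\<^sup>k (-1)\<^sup>j\<^sup>+\<^sup>1 P\<^sub>k\<^sub>-\<^sub>j(n - j) M\<^sub>j\<^sub>,\<^sub>n(y)\<close> at \<open>y = 1\<close>.
  It is proved for \<open>0 \<le> y \<le> 1\<close> by induction on \<open>k\<close>: both sides vanish at \<open>y = 0\<close>, and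
  since \<open>(n - y) M'\<^sub>j\<^sub>,\<^sub>n(y) = M\<^sub>j\<^sub>-\<^sub>1\<^sub>,\<^sub>n\<^sub>-\<^sub>1(y)\<close> (a telescoping computation on the power series
  of \<open>M\<^sub>j\<^sub>,\<^sub>n\<close> in \<open>y\<close>), the derivatives agree by the induction hypothesis at \<open>n - 1\<close>.
  For the evaluations, \<open>\<Sum>\<^sub>k s\<^sup>k P\<^sub>k(u)\<close> solves the delay equation \<open>u f'(u) = s f(u - 1)\<close> with
  \<open>f = 1\<close> on \<open>[0, 1]\<close>; \<open>\<sigma>\<close> and \<open>\<rho>\<close> are its solutions for \<open>s = 1\<close> and \<open>s = -1\<close>.
\<close>

lemma has_sum_of_exhausting_incseq:
  fixes f :: "'a \<Rightarrow> real"
  assumes nonneg: "\<And>x. x \<in> A \<Longrightarrow> f x \<ge> 0"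
    and mono: "mono F" and finite: "\<And>m. finite (F m)" and subset: "\<And>m. F m \<subseteq> A"
    and exhaust: "\<And>X. finite X \<Longrightarrow> X \<subseteq> A \<Longrightarrow> \<exists>m. X \<subseteq> F m"
    and lim: "(\<lambda>m. sum f (F m)) \<longlonglongrightarrow> L"
  shows "(f has_sum L) A"
proof -
  have sum_le: "sum f X \<le> sum f Y" if "X \<subseteq> Y" "finite Y" "Y \<subseteq> A" for X Y
    using that nonneg by (intro sum_mono2) auto
  have "incseq (\<lambda>m. sum f (F m))"
    using mono finite subset by (intro incseq_SucI sum_le) (auto simp: mono_def)
  then have le_L: "sum f (F m) \<le> L" for m
    by (rule incseq_le[OF _ lim])
  show ?thesis
    unfolding has_sum_def
  proof (rule order_tendstoI)
    fix a
    assume "a < L"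
    then obtain m where m: "a < sum f (F m)"
      using order_tendstoD(1)[OF lim] eventually_sequentially by (metis order.refl)
    have "\<forall>\<^sub>F X in finite_subsets_at_top A. F m \<subseteq> X \<and> finite X \<and> X \<subseteq> A"
      using finite subset by (auto simp: eventually_finite_subsets_at_top)
    then show "\<forall>\<^sub>F X in finite_subsets_at_top A. a < sum f X"
      by eventually_elim (use m sum_le in \<open>blast intro: less_le_trans\<close>)
  next
    fix a
    assume "L < a"
    show "\<forall>\<^sub>F X in finite_subsets_at_top A. sum f X < a"
    proof (rule eventually_finite_subsets_at_top_weakI)
      fix X
      assume "finite X" "X \<subseteq> A"
      then obtain m where "X \<subseteq> F m"
        using exhaust by blast
      then have "sum f X \<le> sum f (F m)"
        by (rule sum_le) (use finite subset in auto)
      with le_L[of m] \<open>L < a\<close> show "sum f X < a"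
        by linarith
    qed
  qed
qed

lemma summable_of_nat_pow_mult_power:
  fixes x :: real
  assumes "norm x < 1"
  shows "summable (\<lambda>k. real k ^ j * x ^ k)"
  using assms
proof (induction j arbitrary: x)
  case 0
  then show ?case by (simp add: summable_geometric)
next
  case (Suc j)
  have "summable (\<lambda>k. diffs (\<lambda>k. real k ^ j) k * x ^ k)"
    by (rule termdiff_converges[where K = 1]) (use Suc in auto)
  then have "summable (\<lambda>k. real (Suc k) ^ Suc j * x ^ k * x)"
    by (intro summable_mult2) (simp add: diffs_def)
  then show ?case
    by (subst summable_Suc_iff[symmetric]) (simp add: mult_ac)
qed

lemma suminf_one_minus_mult:
  fixes b :: "nat \<Rightarrow> real"
  assumes "summable (\<lambda>k. b k * x ^ k)"
  shows "(1 - x) * (\<Sum>k. b k * x ^ k) = b 0 + (\<Sum>k. (b (Suc k) - b k) * x ^ Suc k)"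
proof -
  define B where "B = (\<Sum>k. b k * x ^ k)"
  have "(\<lambda>k. b k * x ^ k) sums B"
    using assms by (simp add: B_def summable_sums)
  moreover have "(\<lambda>k. b (Suc k) * x ^ Suc k) sums (B - b 0)"
    using \<open>(\<lambda>k. b k * x ^ k) sums B\<close> by (subst sums_Suc_iff) simp
  ultimately have "(\<lambda>k. b (Suc k) * x ^ Suc k - x * (b k * x ^ k)) sums (B - b 0 - x * B)"
    by (intro sums_diff sums_mult)
  then have "(\<lambda>k. (b (Suc k) - b k) * x ^ Suc k) sums (B - b 0 - x * B)"
    by (simp add: algebra_simps)
  then show ?thesis
    by (simp add: sums_iff B_def algebra_simps)
qed

lemma divide_of_nat_le_self: "(a::real) \<ge> 0 \<Longrightarrow> a / real k \<le> a"
  by (cases k) (simp_all add: divide_le_eq mult_le_cancel_left1)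

lemma coeff_power_scaled_X_mult_const:
  fixes p :: "'a::comm_semiring_1 poly"
  shows "coeff ([:0, a:] ^ j * p * [:c:]) k = (if k < j then 0 else a ^ j * coeff p (k - j) * c)"
proof -
  have "[:0, a:] = monom a 1"
    by (simp add: monom_Suc monom_0)
  then have "[:0, a:] ^ j = monom (a ^ j) j"
    by (simp add: monom_power)
  then show ?thesis
    by (simp add: coeff_monom_mult) (simp add: ac_simps)
qed

lemma poly_eq_sum_lessThan:
  fixes p :: "'a::comm_semiring_1 poly"
  assumes "\<And>k. k \<ge> n \<Longrightarrow> coeff p k = 0"
  shows "poly p x = (\<Sum>k<n. coeff p k * x ^ k)"
proof -
  have "degree p \<le> n"
    by (rule degree_le) (use assms in auto)
  then have "poly p x = (\<Sum>k\<le>n. coeff p k * x ^ k)"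
    unfolding poly_altdef by (intro sum.mono_neutral_left) (auto simp: coeff_eq_0)
  then show ?thesis
    by (simp add: assms flip: lessThan_Suc_atMost)
qed

lemma mz_0: "mz n y 0 = y / real n"
  by (simp add: mz_def)

lemma mz_Suc: "n \<ge> 1 \<Longrightarrow> mz n y (Suc i) = mz (n - 1) (real n) i"
  by (auto simp: mz_def of_nat_diff)

lemma mz_nonneg: "y \<ge> 0 \<Longrightarrow> i < n \<Longrightarrow> mz n y i \<ge> 0"
  by (auto simp: mz_def)

lemma dec_tuples_0: "dec_tuples 0 = {[]}"
  by (auto simp: dec_tuples_def)

lemma M_0: "M 0 n y = 1"
  by (simp add: M_def dec_tuples_0)

definition dec_tuples_below :: "nat \<Rightarrow> nat \<Rightarrow> nat list set" where
  "dec_tuples_below j m = {ns \<in> dec_tuples j. \<forall>x\<in>set ns. x < m}"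

lemma finite_dec_tuples_below: "finite (dec_tuples_below j m)"
proof (rule finite_subset)
  show "dec_tuples_below j m \<subseteq> {ns. set ns \<subseteq> {..<m} \<and> length ns = j}"
    by (auto simp: dec_tuples_below_def dec_tuples_def)
qed (simp add: finite_lists_length_eq)

lemma dec_tuples_below_0: "dec_tuples_below 0 m = {[]}"
  by (auto simp: dec_tuples_below_def dec_tuples_0)

lemma dec_tuples_below_Suc:
  "dec_tuples_below (Suc j) m = (\<lambda>(k, ns). k # ns) ` (SIGMA k:{0<..<m}. dec_tuples_below j k)"
proof (rule set_eqI, rule iffI)
  fix xs
  assume xs: "xs \<in> dec_tuples_below (Suc j) m"
  then obtain k ns where "xs = k # ns"
    by (auto simp: dec_tuples_below_def dec_tuples_def length_Suc_conv)
  with xs show "xs \<in> (\<lambda>(k, ns). k # ns) ` (SIGMA k:{0<..<m}. dec_tuples_below j k)"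
    by (auto simp: dec_tuples_below_def dec_tuples_def image_iff)
next
  fix xs
  assume "xs \<in> (\<lambda>(k, ns). k # ns) ` (SIGMA k:{0<..<m}. dec_tuples_below j k)"
  then show "xs \<in> dec_tuples_below (Suc j) m"
    by (auto simp: dec_tuples_below_def dec_tuples_def) (meson less_trans)
qed

lemma dec_tuples_exhausted:
  assumes "finite X" "X \<subseteq> dec_tuples j"
  shows "X \<subseteq> dec_tuples_below j (Suc (\<Sum>ns\<in>X. sum_list ns))"
proof
  fix ns
  assume ns: "ns \<in> X"
  have "x \<le> (\<Sum>ns\<in>X. sum_list ns)" if "x \<in> set ns" for x
    using member_le_sum_list[OF that] member_le_sum[OF ns _ assms(1), of sum_list] by simp
  with ns assms(2) show "ns \<in> dec_tuples_below j (Suc (\<Sum>ns\<in>X. sum_list ns))"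
    by (auto simp: dec_tuples_below_def less_Suc_eq_le)
qed

text \<open>\<open>M_trunc j n y m\<close> is the sum defining \<open>M j n y\<close> restricted to \<open>n\<^sub>1 < m\<close>, computed by
  peeling off \<open>n\<^sub>1 = k\<close>; the summand for \<open>k = 0\<close> vanishes because \<open>x / 0 = 0\<close>.\<close>

fun M_trunc :: "nat \<Rightarrow> nat \<Rightarrow> real \<Rightarrow> nat \<Rightarrow> real" where
  "M_trunc 0 n y m = 1"
| "M_trunc (Suc j) n y m = (\<Sum>k<m. (y / real n) ^ k / real k * M_trunc j (n - 1) (real n) k)"

lemma sum_dec_tuples_below_eq_M_trunc:
  "j \<le> n \<Longrightarrow>
    (\<Sum>ns\<in>dec_tuples_below j m. \<Prod>i<j. mz n y i ^ (ns ! i) / real (ns ! i)) = M_trunc j n y m"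
proof (induction j arbitrary: n y m)
  case 0
  then show ?case by (simp add: dec_tuples_below_0)
next
  case (Suc j)
  have n: "n \<ge> 1" "j \<le> n - 1"
    using Suc.prems by auto
  have inj: "inj_on (\<lambda>(k, ns). k # ns) (SIGMA k:{0<..<m}. dec_tuples_below j k)"
    by (auto simp: inj_on_def)
  have "(\<Sum>ns\<in>dec_tuples_below (Suc j) m. \<Prod>i<Suc j. mz n y i ^ (ns ! i) / real (ns ! i))
      = (\<Sum>k\<in>{0<..<m}. \<Sum>ns\<in>dec_tuples_below j k.
           \<Prod>i<Suc j. mz n y i ^ ((k # ns) ! i) / real ((k # ns) ! i))"
    unfolding dec_tuples_below_Suc sum.reindex[OF inj]
    by (simp add: sum.Sigma finite_dec_tuples_below case_prod_unfold)
  also have "\<dots> = (\<Sum>k\<in>{0<..<m}. (y / real n) ^ k / real k * M_trunc j (n - 1) (real n) k)"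
    by (simp only: prod.lessThan_Suc_shift nth_Cons_0 nth_Cons_Suc mz_Suc[OF n(1)] mz_0
        sum_distrib_left[symmetric] Suc.IH[OF n(2)])
  also have "\<dots> = M_trunc (Suc j) n y m"
    unfolding M_trunc.simps by (rule sum.mono_neutral_left) auto
  finally show ?case .
qed

lemma M_eq_lim_M_trunc:
  assumes "j \<le> n" "y \<ge> 0" "(\<lambda>m. M_trunc j n y m) \<longlonglongrightarrow> L"
  shows "M j n y = L"
proof -
  let ?f = "\<lambda>ns. \<Prod>i<j. mz n y i ^ (ns ! i) / real (ns ! i)"
  have "(?f has_sum L) (dec_tuples j)"
  proof (rule has_sum_of_exhausting_incseq[where F = "dec_tuples_below j"])
    show "?f ns \<ge> 0" for ns
      using assms(1,2) by (intro prod_nonneg divide_nonneg_nonneg zero_le_power mz_nonneg) auto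
    show "mono (dec_tuples_below j)"
      by (auto simp: mono_def dec_tuples_below_def)
    show "\<exists>m. X \<subseteq> dec_tuples_below j m" if "finite X" "X \<subseteq> dec_tuples j" for X
      using dec_tuples_exhausted[OF that] by blast
    show "(\<lambda>m. sum ?f (dec_tuples_below j m)) \<longlonglongrightarrow> L"
      using assms(3) by (simp add: sum_dec_tuples_below_eq_M_trunc[OF assms(1)])
  qed (use finite_dec_tuples_below in \<open>auto simp: dec_tuples_below_def\<close>)
  then show ?thesis
    by (simp add: M_def infsumI)
qed

lemma M_trunc_nonneg: "y \<ge> 0 \<Longrightarrow> M_trunc j n y m \<ge> 0"
  by (induction j arbitrary: n y m)
    (auto intro!: sum_nonneg mult_nonneg_nonneg divide_nonneg_nonneg)

lemma M_trunc_le: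
  "j < n \<Longrightarrow> M_trunc j n (real n + 1) m \<le> real m ^ j * ((real n + 1) / (real n + 1 - real j)) ^ m"
proof (induction j arbitrary: n m)
  case 0
  then show ?case by simp
next
  case (Suc j)
  have n: "n \<ge> 1" "j < n - 1"
    using Suc.prems by auto
  define q where "q = (real n + 1) / (real n - real j)"
  have q: "q \<ge> 1"
    using Suc.prems by (simp add: q_def)
  have IH: "M_trunc j (n - 1) (real n) k \<le> real k ^ j * (real n / (real n - real j)) ^ k" for k
    using Suc.IH[OF n(2), of k] n by (simp add: of_nat_diff)
  have "((real n + 1) / real n) ^ k / real k * M_trunc j (n - 1) (real n) k \<le> real m ^ j * q ^ m"
    if "k < m" for k
  proof -
    have "((real n + 1) / real n) ^ k / real k * M_trunc j (n - 1) (real n) k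
        \<le> ((real n + 1) / real n) ^ k * (real k ^ j * (real n / (real n - real j)) ^ k)"
      using IH[of k] M_trunc_nonneg[of "real n" j "n - 1" k]
      by (intro mult_mono divide_of_nat_le_self) auto
    also have "\<dots> = real k ^ j * q ^ k"
      using n by (simp add: q_def power_mult_distrib[symmetric] mult_ac)
    also have "\<dots> \<le> real m ^ j * q ^ m"
      using that q by (intro mult_mono power_mono power_increasing) auto
    finally show ?thesis .
  qed
  then have "M_trunc (Suc j) n (real n + 1) m \<le> (\<Sum>k<m. real m ^ j * q ^ m)"
    by (simp only: M_trunc.simps) (rule sum_mono, simp)
  then show ?case
    using Suc.prems by (simp add: q_def)
qed

text \<open>Peeling off \<open>n\<^sub>1 = k\<close> in the definition of \<open>M\<close> leaves \<open>(y / n)\<^sup>k / k\<close> times a truncated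
  sum of the same shape, which makes \<open>M (Suc j) n\<close> a power series in \<open>y\<close>.\<close>

definition M_coeff :: "nat \<Rightarrow> nat \<Rightarrow> nat \<Rightarrow> real" where
  "M_coeff j n k = M_trunc j (n - 1) (real n) k / (real k * real n ^ k)"

definition M_series :: "nat \<Rightarrow> nat \<Rightarrow> real \<Rightarrow> real" where
  "M_series j n y = (\<Sum>k. M_coeff j n k * y ^ k)"

lemma M_coeff_0: "M_coeff j n 0 = 0"
  by (simp add: M_coeff_def)

lemma M_trunc_Suc_eq_partial_sum: "M_trunc (Suc j) n y m = (\<Sum>k<m. M_coeff j n k * y ^ k)"
  by (simp add: M_coeff_def power_divide mult_ac)

text \<open>The radius of convergence is \<open>n - j \<ge> 2\<close>, so the series converges on a neighbourhood
  of \<open>[0, 1]\<close>.\<close>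

lemma summable_M_coeff:
  assumes "Suc j < n" "\<bar>z\<bar> \<le> 3/2"
  shows "summable (\<lambda>k. M_coeff j n k * z ^ k)"
proof (rule summable_comparison_test[OF _ summable_of_nat_pow_mult_power[of "3/4" j]])
  have n: "n \<ge> 1" "j < n - 1" "real n - real j \<ge> 2"
    using assms by auto
  have "\<bar>M_coeff j n k * z ^ k\<bar> \<le> real k ^ j * (3/4) ^ k" for k
  proof -
    have T: "0 \<le> M_trunc j (n - 1) (real n) k"
      "M_trunc j (n - 1) (real n) k \<le> real k ^ j * (real n / (real n - real j)) ^ k"
      using M_trunc_nonneg M_trunc_le[OF n(2), of k] n by (auto simp: of_nat_diff)
    have "\<bar>M_coeff j n k * z ^ k\<bar> = M_trunc j (n - 1) (real n) k * (\<bar>z\<bar> / real n) ^ k / real k"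
      using T by (simp add: M_coeff_def power_divide abs_mult power_abs mult_ac)
    also have "\<dots> \<le> real k ^ j * (real n / (real n - real j)) ^ k * (\<bar>z\<bar> / real n) ^ k"
      using T by (intro order.trans[OF divide_of_nat_le_self] mult_right_mono) auto
    also have "\<dots> = real k ^ j * (\<bar>z\<bar> / (real n - real j)) ^ k"
      using n by (simp add: power_mult_distrib[symmetric] mult.assoc)
    also have "\<dots> \<le> real k ^ j * (3/4) ^ k"
      using n assms(2) by (intro mult_left_mono power_mono) (auto simp: divide_le_eq)
    finally show ?thesis .
  qed
  then show "\<exists>N. \<forall>k\<ge>N. norm (M_coeff j n k * z ^ k) \<le> real k ^ j * (3/4) ^ k"
    by auto
qed simp

lemma M_Suc_eq_M_series:
  assumes "Suc j < n" "0 \<le> y" "y \<le> 3/2"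
  shows "M (Suc j) n y = M_series j n y"
  unfolding M_series_def
proof (rule M_eq_lim_M_trunc)
  show "(\<lambda>m. M_trunc (Suc j) n y m) \<longlonglongrightarrow> (\<Sum>k. M_coeff j n k * y ^ k)"
    unfolding M_trunc_Suc_eq_partial_sum using assms
    by (intro summable_LIMSEQ summable_M_coeff) auto
qed (use assms in auto)

lemma M_trunc_Suc_increment:
  assumes "n \<ge> 2"
  shows "(M_trunc (Suc j) (n - 1) (real n) (Suc m) - M_trunc (Suc j) (n - 1) (real n) m)
      * (y / real n) ^ m = M_coeff j (n - 1) m * y ^ m"
proof -
  have "real n > 0" "real (n - 1) > 0" "real (n - 1 - 1) = real (n - 1) - 1"
    using assms by (auto simp: of_nat_diff)
  then show ?thesis
    using assms by (simp add: M_coeff_def power_divide field_simps)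
qed

lemma M_series_diffs:
  assumes "Suc j < n" "0 \<le> y" "y \<le> 1"
  shows "(real n - y) * (\<Sum>k. diffs (M_coeff j n) k * y ^ k) = M j (n - 1) y"
proof -
  define b where "b k = M_trunc j (n - 1) (real n) (Suc k)" for k
  define x where "x = y / real n"
  have n: "real n > 0"
    using assms by simp
  have diffs_eq: "diffs (M_coeff j n) k * y ^ k = b k * x ^ k / real n" for k
    using n by (simp add: diffs_def M_coeff_def b_def x_def power_divide del: of_nat_Suc)
  have "summable (\<lambda>k. diffs (M_coeff j n) k * y ^ k)"
    by (rule termdiff_converges[where K = "3/2"]) (use assms summable_M_coeff in auto)
  then have "summable (\<lambda>k. diffs (M_coeff j n) k * y ^ k * real n)"
    by (rule summable_mult2)
  then have summable_b: "summable (\<lambda>k. b k * x ^ k)"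
    using n by (simp add: diffs_eq)
  have "(\<Sum>k. diffs (M_coeff j n) k * y ^ k) = (\<Sum>k. b k * x ^ k) / real n"
    unfolding diffs_eq by (rule suminf_divide[OF summable_b])
  then have "(real n - y) * (\<Sum>k. diffs (M_coeff j n) k * y ^ k) = (1 - x) * (\<Sum>k. b k * x ^ k)"
    using n by (simp add: x_def field_simps)
  also have "\<dots> = b 0 + (\<Sum>k. (b (Suc k) - b k) * x ^ Suc k)"
    by (rule suminf_one_minus_mult[OF summable_b])
  also have "\<dots> = M j (n - 1) y"
  proof (cases j)
    case 0
    then show ?thesis by (simp add: b_def M_0)
  next
    case (Suc i)
    have "(\<Sum>k. (b (Suc k) - b k) * x ^ Suc k) = (\<Sum>k. M_coeff i (n - 1) (Suc k) * y ^ Suc k)"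
      using assms Suc by (simp only: b_def x_def M_trunc_Suc_increment)
    also have "\<dots> = M_series i (n - 1) y"
      unfolding M_series_def using assms Suc
      by (subst suminf_split_head[OF summable_M_coeff]) (auto simp: M_coeff_0)
    also have "\<dots> = M j (n - 1) y"
      using M_Suc_eq_M_series[of i "n - 1" y] assms Suc by simp
    finally show ?thesis
      by (simp add: b_def Suc)
  qed
  finally show ?thesis .
qed

lemma has_real_derivative_M_series:
  assumes "Suc j < n" "0 \<le> y" "y \<le> 1"
  shows "(M_series j n has_real_derivative M j (n - 1) y / (real n - y)) (at y)"
proof -
  have "(M_series j n has_real_derivative (\<Sum>k. diffs (M_coeff j n) k * y ^ k)) (at y)"
    unfolding M_series_def[abs_def]
    by (rule termdiffs_strong[where K = "3/2"]) (use assms summable_M_coeff in auto)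
  moreover have "real n - y \<noteq> 0"
    using assms by linarith
  then have "M j (n - 1) y / (real n - y) = (\<Sum>k. diffs (M_coeff j n) k * y ^ k)"
    unfolding M_series_diffs[OF assms, symmetric] by (rule nonzero_mult_div_cancel_left)
  ultimately show ?thesis
    by simp
qed

lemma M_at_0:
  assumes "0 < j" "j < n"
  shows "M j n 0 = 0"
  using assms M_Suc_eq_M_series[of "j - 1" n 0] by (simp add: M_series_def M_coeff_0)

lemma continuous_on_M:
  assumes "0 < j" "j < n"
  shows "continuous_on {0..1} (M j n)"
proof -
  have "continuous_on {0..1} (M_series (j - 1) n)"
    using DERIV_isCont[OF has_real_derivative_M_series[of "j - 1" n]] assms
    by (auto intro!: continuous_at_imp_continuous_on)
  then show ?thesis
    by (rule continuous_on_cong[THEN iffD1, rotated -1])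
      (use assms M_Suc_eq_M_series[of "j - 1" n] in auto)
qed

lemma has_real_derivative_M:
  assumes "0 < j" "j < n" "0 < y" "y < 1"
  shows "(M j n has_real_derivative M (j - 1) (n - 1) y / (real n - y)) (at y)"
proof (rule has_field_derivative_transform_within_open)
  show "(M_series (j - 1) n has_real_derivative M (j - 1) (n - 1) y / (real n - y)) (at y)"
    by (rule has_real_derivative_M_series) (use assms in auto)
  show "M_series (j - 1) n x = M j n x" if "x \<in> {0<..<1}" for x
    using M_Suc_eq_M_series[of "j - 1" n x] that assms by simp
qed (use assms in auto)

locale P_sequence =
  fixes P :: "nat \<Rightarrow> real \<Rightarrow> real"
  assumes P_0: "\<And>u. u \<ge> 0 \<Longrightarrow> P 0 u = 1"
    and P_at_index: "\<And>k. k \<ge> 1 \<Longrightarrow> P k (real k) = 0"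
    and P_deriv_within: "\<And>k u. k \<ge> 1 \<Longrightarrow> u \<ge> real k \<Longrightarrow>
         ((P k) has_real_derivative (P (k - 1) (u - 1) / u)) (at u within {real k..})"
begin

lemma continuous_on_P:
  assumes "real k \<le> a"
  shows "continuous_on {a..b} (P k)"
proof (cases "k = 0")
  case True
  show ?thesis
    by (rule continuous_on_eq[OF continuous_on_const[of _ 1]]) (use assms True P_0 in auto)
next
  case False
  show ?thesis
    unfolding continuous_on_eq_continuous_within
  proof
    fix u
    assume "u \<in> {a..b}"
    then have "continuous (at u within {real k..}) (P k)"
      using P_deriv_within[of k u] False assms by (intro DERIV_continuous) auto
    then show "continuous (at u within {a..b}) (P k)"
      by (rule continuous_within_subset) (use assms in auto)
  qed
qed

lemma has_real_derivative_P:
  assumes "k \<ge> 1" "u > real k"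
  shows "(P k has_real_derivative P (k - 1) (u - 1) / u) (at u)"
proof -
  have "at u within {real k..} = at u"
    by (rule at_within_interior) (use assms in simp)
  then show ?thesis
    using P_deriv_within[of k u] assms by simp
qed

lemma has_real_derivative_P_0: "u > 0 \<Longrightarrow> (P 0 has_real_derivative 0) (at u)"
  by (rule has_field_derivative_transform_within_open[of "\<lambda>_. 1" 0 u "{0<..}"]) (auto simp: P_0)

definition expansion :: "nat \<Rightarrow> nat \<Rightarrow> real \<Rightarrow> real" where
  "expansion k n y = (\<Sum>j\<in>{1..k}. (-1) ^ (j + 1) * P (k - j) (real (n - j)) * M j n y)"

lemma expansion_at_0: "k < n \<Longrightarrow> expansion k n 0 = 0"
  by (auto simp: expansion_def M_at_0)

lemma continuous_on_expansion: "k < n \<Longrightarrow> continuous_on {0..1} (expansion k n)"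
  unfolding expansion_def
  by (intro continuous_on_sum continuous_on_mult continuous_on_const continuous_on_M) auto

lemma has_real_derivative_expansion:
  assumes "k < n" "0 < y" "y < 1"
  shows "(expansion k n has_real_derivative
      (\<Sum>j\<in>{1..k}. (-1) ^ (j + 1) * P (k - j) (real (n - j)) * M (j - 1) (n - 1) y) / (real n - y))
      (at y)"
  unfolding expansion_def sum_divide_distrib times_divide_eq_right[symmetric]
  by (intro DERIV_sum DERIV_cmult has_real_derivative_M) (use assms in auto)

lemma expansion_Suc_shift:
  "(\<Sum>j\<in>{1..Suc k}. (-1) ^ (j + 1) * P (Suc k - j) (real (n - j)) * M (j - 1) (n - 1) y)
    = P k (real (n - 1)) - expansion k (n - 1) y"
proof -
  have "(\<Sum>j\<in>{1..Suc k}. (-1) ^ (j + 1) * P (Suc k - j) (real (n - j)) * M (j - 1) (n - 1) y)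
      = (\<Sum>i\<in>{0..k}. (-1) ^ i * P (k - i) (real (n - 1 - i)) * M i (n - 1) y)"
    unfolding One_nat_def sum.shift_bounds_cl_Suc_ivl by (intro sum.cong) simp_all
  also have "\<dots> = P k (real (n - 1)) + (\<Sum>i\<in>{1..k}. (-1) ^ i * P (k - i) (real (n - 1 - i)) * M i (n - 1) y)"
    by (simp add: sum.atLeast_Suc_atMost M_0)
  finally show ?thesis
    by (simp add: expansion_def sum_negf[symmetric])
qed

lemma P_diff_eq_expansion:
  "k < n \<Longrightarrow> 0 \<le> y \<Longrightarrow> y \<le> 1 \<Longrightarrow> P k (real n) - P k (real n - y) = expansion k n y"
proof (induction k arbitrary: n y)
  case 0
  then show ?case by (simp add: expansion_def P_0)
next
  case (Suc k)
  have n: "k < n - 1" "real (n - 1) = real n - 1"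
    using Suc.prems by (auto simp: of_nat_diff)
  define F where "F y = P (Suc k) (real n) - P (Suc k) (real n - y) - expansion (Suc k) n y" for y
  have "continuous_on {0..1} (\<lambda>y. P (Suc k) (real n - y))"
    using Suc.prems
    by (intro continuous_on_compose2[OF continuous_on_P[of "Suc k" "real n - 1" "real n"]])
      (auto intro!: continuous_intros)
  then have "continuous_on {0..1} F"
    unfolding F_def using Suc.prems by (intro continuous_intros continuous_on_expansion)
  moreover have "(F has_real_derivative 0) (at y)" if y: "0 < y" "y < 1" for y
  proof -
    have "(P (Suc k) has_real_derivative P k (real n - y - 1) / (real n - y)) (at (real n - y))"
      using has_real_derivative_P[of "Suc k" "real n - y"] Suc.prems y by simp
    then have "((\<lambda>y. P (Suc k) (real n - y)) has_real_derivative
        P k (real n - y - 1) / (real n - y) * -1) (at y)"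
      by (rule DERIV_chain2) (auto intro!: derivative_eq_intros)
    moreover have "(expansion (Suc k) n has_real_derivative
        (P k (real (n - 1)) - expansion k (n - 1) y) / (real n - y)) (at y)"
      using has_real_derivative_expansion[of "Suc k" n y] Suc.prems y
      by (simp only: expansion_Suc_shift)
    ultimately have "(F has_real_derivative 0 - P k (real n - y - 1) / (real n - y) * -1
        - (P k (real (n - 1)) - expansion k (n - 1) y) / (real n - y)) (at y)"
      unfolding F_def[abs_def] by (intro DERIV_diff DERIV_const)
    moreover have "P k (real n - y - 1) = P k (real (n - 1)) - expansion k (n - 1) y"
      using Suc.IH[OF n(1), of y] y n(2) by (simp add: algebra_simps)
    ultimately show ?thesis
      by simp
  qed
  ultimately have "F y = F 0"
    using Suc.prems by (intro DERIV_isconst2[of 0 1]) auto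
  then show ?case
    using Suc.prems by (simp add: F_def expansion_at_0)
qed

text \<open>In the induction step, \<open>P\<^sub>k(k) = 0\<close> lets \<open>coeff (S (n - 1)) k\<close> be written as
  \<open>P k (n - 1)\<close> also for \<open>k = n - 1\<close>.\<close>

lemma coeff_S: "coeff (S n) k = (if k < n then P k (real n) else 0)"
proof (induction n arbitrary: k rule: S.induct)
  case 1
  then show ?case by simp
next
  case 2
  then show ?case by (simp add: coeff_1 P_0)
next
  case (3 m)
  let ?n = "Suc (Suc m)"
  have "coeff (S ?n) k = coeff (S (Suc m)) k
      - (\<Sum>j\<in>{1..Suc m}. if k < j then 0 else (-1) ^ j * coeff (S (?n - j)) (k - j) * M j ?n 1)"
    by (simp only: S.simps coeff_diff coeff_sum coeff_power_scaled_X_mult_const)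
  also have "\<dots> = coeff (S (Suc m)) k
      - (\<Sum>j\<in>{1..Suc m}. if k < j \<or> ?n \<le> k then 0 else (-1) ^ j * P (k - j) (real (?n - j)) * M j ?n 1)"
    using "3.IH"(2) by (intro arg_cong2[where f = minus] sum.cong) auto
  also have "\<dots> = (if k < ?n then P k (real ?n) else 0)"
  proof (cases "k < ?n")
    case True
    have "coeff (S (Suc m)) k = P k (real (Suc m))"
      using "3.IH"(1) True P_at_index[of "Suc m"] by (cases "k = Suc m") auto
    moreover have "(\<Sum>j\<in>{1..Suc m}. if k < j then 0 else (-1) ^ j * P (k - j) (real (?n - j)) * M j ?n 1)
        = - expansion k ?n 1"
      using True unfolding expansion_def sum_negf[symmetric]
      by (intro sum.mono_neutral_cong_right) auto
    ultimately show ?thesis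
      using True P_diff_eq_expansion[of k ?n 1] by simp
  qed (use "3.IH"(1) in simp)
  finally show ?case .
qed

lemma sum_P_eq_delay_solution:
  fixes f :: "real \<Rightarrow> real"
  assumes cont: "continuous_on {0..} f"
    and init: "\<And>u. 0 \<le> u \<Longrightarrow> u \<le> 1 \<Longrightarrow> f u = 1"
    and deriv: "\<And>u. u > 1 \<Longrightarrow> (f has_real_derivative s * f (u - 1) / u) (at u)"
  shows "real m \<le> u \<Longrightarrow> u \<le> real m + 1 \<Longrightarrow> (\<Sum>k\<le>m. s ^ k * P k u) = f u"
proof (induction m arbitrary: u)
  case 0
  then show ?case using P_0 init by simp
next
  case (Suc m)
  define a where "a = real (Suc m)"
  define g where "g u = (\<Sum>k\<le>Suc m. s ^ k * P k u) - f u" for u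
  have "g a = 0"
    using Suc.IH[of a] P_at_index[of "Suc m"] by (simp add: g_def a_def)
  moreover have "continuous_on {a..a + 1} g"
    unfolding g_def using continuous_on_P
    by (intro continuous_intros continuous_on_subset[OF cont]) (auto simp: a_def)
  moreover have "(g has_real_derivative 0) (at x)" if x: "a < x" "x < a + 1" for x
  proof -
    have "(P k has_real_derivative (if k = 0 then 0 else P (k - 1) (x - 1) / x)) (at x)"
      if "k \<le> Suc m" for k
      using has_real_derivative_P_0[of x] has_real_derivative_P[of k x] that x
      by (auto simp: a_def)
    then have "(g has_real_derivative
        (\<Sum>k\<le>Suc m. s ^ k * (if k = 0 then 0 else P (k - 1) (x - 1) / x)) - s * f (x - 1) / x) (at x)"
      unfolding g_def[abs_def] using x
      by (intro DERIV_diff DERIV_sum DERIV_cmult deriv) (auto simp: a_def)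
    moreover have "(\<Sum>k\<le>Suc m. s ^ k * (if k = 0 then 0 else P (k - 1) (x - 1) / x))
        = s / x * (\<Sum>k\<le>m. s ^ k * P k (x - 1))"
      by (subst sum.atMost_Suc_shift) (simp add: sum_distrib_left algebra_simps)
    moreover have "(\<Sum>k\<le>m. s ^ k * P k (x - 1)) = f (x - 1)"
      using Suc.IH[of "x - 1"] x by (simp add: a_def)
    ultimately show ?thesis
      by simp
  qed
  ultimately have "g u = 0"
    using DERIV_isconst2[of a "a + 1" g u] Suc.prems by (auto simp: a_def)
  then show ?case
    by (simp add: g_def)
qed

lemma poly_S_eq_delay_solution:
  fixes f :: "real \<Rightarrow> real"
  assumes "continuous_on {0..} f"
    and "\<And>u. 0 \<le> u \<Longrightarrow> u \<le> 1 \<Longrightarrow> f u = 1"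
    and "\<And>u. u > 1 \<Longrightarrow> (f has_real_derivative s * f (u - 1) / u) (at u)"
    and "n \<ge> 1"
  shows "poly (S n) s = f (real n)"
proof -
  have "poly (S n) s = (\<Sum>k<n. coeff (S n) k * s ^ k)"
    by (rule poly_eq_sum_lessThan) (simp add: coeff_S)
  also have "\<dots> = (\<Sum>k\<le>n - 1. s ^ k * P k (real n))"
    using \<open>n \<ge> 1\<close> by (intro sum.cong) (auto simp: coeff_S)
  also have "\<dots> = f (real n)"
    using assms by (intro sum_P_eq_delay_solution) (auto simp: of_nat_diff)
  finally show ?thesis .
qed

end

lemma sigma_delay_equation:
  fixes omega sigma :: "real \<Rightarrow> real"
  assumes cont: "continuous_on {1..} omega"
    and init: "\<And>u. 1 \<le> u \<Longrightarrow> u \<le> 2 \<Longrightarrow> u * omega u = 1"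
    and deriv: "\<And>u. u > 2 \<Longrightarrow> (omega has_real_derivative ((omega (u - 1) - omega u) / u)) (at u)"
    and sigma_def: "\<And>u. sigma u = (u + 1) * omega (u + 1)"
  shows "continuous_on {0..} sigma"
    and "\<And>u. 0 \<le> u \<Longrightarrow> u \<le> 1 \<Longrightarrow> sigma u = 1"
    and "\<And>u. u > 1 \<Longrightarrow> (sigma has_real_derivative 1 * sigma (u - 1) / u) (at u)"
proof -
  have sigma_eq: "sigma = (\<lambda>u. (u + 1) * omega (u + 1))"
    using sigma_def by blast
  show "continuous_on {0..} sigma"
    unfolding sigma_eq
    by (intro continuous_intros continuous_on_compose2[OF cont]) auto
  show "sigma u = 1" if "0 \<le> u" "u \<le> 1" for u
    using init[of "u + 1"] that by (simp add: sigma_def)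
  show "(sigma has_real_derivative 1 * sigma (u - 1) / u) (at u)" if "u > 1" for u
  proof -
    have "((\<lambda>u. omega (u + 1)) has_real_derivative (omega u - omega (u + 1)) / (u + 1) * 1) (at u)"
      using deriv[of "u + 1"] that by (intro DERIV_chain2) (auto intro!: derivative_eq_intros)
    then have "(sigma has_real_derivative
        1 * omega (u + 1) + (u + 1) * ((omega u - omega (u + 1)) / (u + 1) * 1)) (at u)"
      unfolding sigma_eq by (intro derivative_eq_intros) auto
    moreover have "1 * omega (u + 1) + (u + 1) * ((omega u - omega (u + 1)) / (u + 1) * 1)
        = 1 * sigma (u - 1) / u"
      using that by (simp add: sigma_def field_simps)
    ultimately show ?thesis
      by simp
  qed
qed

theorem mainTheorem12:
  fixes P :: "nat \<Rightarrow> real \<Rightarrow> real"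
    and rho :: "real \<Rightarrow> real"
    and omega :: "real \<Rightarrow> real"
    and sigma :: "real \<Rightarrow> real"
  assumes P0: "\<And>u. u \<ge> 0 \<Longrightarrow> P 0 u = 1"
    and Pk_init: "\<And>k. k \<ge> 1 \<Longrightarrow> P k (real k) = 0"
    and Pk_deriv: "\<And>k u. k \<ge> 1 \<Longrightarrow> u \<ge> real k \<Longrightarrow>
         ((P k) has_real_derivative (P (k - 1) (u - 1) / u)) (at u within {real k..})"
    and rho_cont: "continuous_on {0..} rho"
    and rho_init: "\<And>u. 0 \<le> u \<Longrightarrow> u \<le> 1 \<Longrightarrow> rho u = 1"
    and rho_deriv: "\<And>u. u > 1 \<Longrightarrow> (rho has_real_derivative (- rho (u - 1) / u)) (at u)"
    and omega_cont: "continuous_on {1..} omega"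
    and omega_init: "\<And>u. 1 \<le> u \<Longrightarrow> u \<le> 2 \<Longrightarrow> u * omega u = 1"
    and omega_deriv: "\<And>u. u > 2 \<Longrightarrow>
         (omega has_real_derivative ((omega (u - 1) - omega u) / u)) (at u)"
    and sigma_def: "\<And>u. sigma u = (u + 1) * omega (u + 1)"
  shows "(\<forall>n k. k < n \<longrightarrow> coeff (S n) k = P k (real n))
       \<and> (\<forall>n. n \<ge> 1 \<longrightarrow> poly (S n) 1 = sigma (real n))
       \<and> (\<forall>n. n \<ge> 1 \<longrightarrow> poly (S n) (-1) = rho (real n))"
proof -
  interpret P_sequence P
    using P0 Pk_init Pk_deriv by unfold_locales
  have "poly (S n) 1 = sigma (real n)" if "n \<ge> 1" for n
    using sigma_delay_equation[OF omega_cont omega_init omega_deriv sigma_def] that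
    by (intro poly_S_eq_delay_solution) auto
  moreover have "poly (S n) (-1) = rho (real n)" if "n \<ge> 1" for n
    using rho_cont rho_init rho_deriv that by (intro poly_S_eq_delay_solution) auto
  ultimately show ?thesis
    by (simp add: coeff_S)
qed

end
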